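(* Let $C\subseteq\mathbb R$ be a compact interval and $g_1,\dots,g_N:C\to\mathbb R$ continuous functions. Suppose there exist $o_i^*\in\operatorname*{argmax}_{o\in C}g_i(o)$, $i=1,\dots,N$, with $o_1^*\ge o_2^*\ge\cdots\ge o_N^*$, such that each $g_i$ is non-decreasing on $C\cap(-\infty,o_i^*]$ and non-increasing on $C\cap[o_i^*,\infty)$. Then $$\sup_{\substack{\bm v\in C^N\\ v_1\le\cdots\le v_N}}\ \sum_{i=1}^N g_i(v_i)=\sup_{v\in C}\ \sum_{i=1}^N g_i(v).$$ *)

theory Defs
  imports "HOL-Analysis.Analysis"
begin

end

theory Submission
  imports Defs
begin

text \<open>
  A constant profile is monotone, so the right-hand supremum is at most the left one.
  Conversely, given a monotone profile \<open>v\<close>, put \<open>w = max\<^sub>j min (v\<^sub>j, o\<^sub>j\<^sup>*)\<close>. Because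
  \<open>v\<close> increases while the peaks \<open>o\<^sup>*\<close> decrease, \<open>w\<close> lies between \<open>v\<^sub>i\<close> and \<open>o\<^sub>i\<^sup>*\<close> for
  every \<open>i\<close>, so moving \<open>v\<^sub>i\<close> to \<open>w\<close> brings it closer to the peak of the unimodal \<open>g\<^sub>i\<close>
  and cannot decrease \<open>g\<^sub>i\<close>.
\<close>

lemma unimodal_le_between:
  fixes f :: "'a::linorder \<Rightarrow> 'b::order"
  assumes up: "mono_on (S \<inter> {..c}) f" and down: "antimono_on (S \<inter> {c..}) f"
    and "x \<in> S" "w \<in> S" "min x c \<le> w" "w \<le> max x c"
  shows "f x \<le> f w"
proof (cases "x \<le> c")
  case True
  then show ?thesis using assms by (intro mono_onD[OF up]) auto
next
  case False
  then show ?thesis using assms by (intro monotone_onD[OF down]) auto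
qed

lemma min_le_max_mono_antimono:
  fixes v p :: "'i::linorder \<Rightarrow> 'a::linorder"
  assumes "mono_on I v" "antimono_on I p" "i \<in> I" "j \<in> I"
  shows "min (v j) (p j) \<le> max (v i) (p i)"
proof (cases "i \<le> j")
  case True
  then have "p j \<le> p i" using assms by (intro monotone_onD[OF assms(2)]) auto
  then show ?thesis by (simp add: min_le_iff_disj le_max_iff_disj)
next
  case False
  then have "v j \<le> v i" using assms by (intro mono_onD[OF assms(1)]) auto
  then show ?thesis by (simp add: min_le_iff_disj le_max_iff_disj)
qed

lemma ex_common_point_dominating:
  fixes v peak :: "'i::linorder \<Rightarrow> 'a::linorder" and g :: "'i \<Rightarrow> 'a \<Rightarrow> 'b::order"
  assumes "finite I" "a \<le> b" "mono_on I v" "antimono_on I peak"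
    and range: "\<And>i. i \<in> I \<Longrightarrow> v i \<in> {a..b} \<and> peak i \<in> {a..b}"
    and up: "\<And>i. i \<in> I \<Longrightarrow> mono_on ({a..b} \<inter> {..peak i}) (g i)"
    and down: "\<And>i. i \<in> I \<Longrightarrow> antimono_on ({a..b} \<inter> {peak i..}) (g i)"
  shows "\<exists>w\<in>{a..b}. \<forall>i\<in>I. g i (v i) \<le> g i w"
proof -
  define F where "F = insert a ((\<lambda>j. min (v j) (peak j)) ` I)"
  define w where "w = Max F"
  have F: "finite F" "F \<noteq> {}" using \<open>finite I\<close> by (auto simp: F_def)
  have "w \<in> {a..b}"
    using F range \<open>a \<le> b\<close> by (auto simp: w_def F_def min_le_iff_disj intro: Max_ge)
  moreover have "g i (v i) \<le> g i w" if i: "i \<in> I" for i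
  proof (rule unimodal_le_between[OF up[OF i] down[OF i]])
    show "min (v i) (peak i) \<le> w"
      using F i by (auto simp: w_def F_def intro: Max_ge)
    have "\<forall>x\<in>F. x \<le> max (v i) (peak i)"
      using range[OF i] min_le_max_mono_antimono[OF assms(3,4) i]
      by (auto simp: F_def le_max_iff_disj)
    then show "w \<le> max (v i) (peak i)"
      using F by (simp add: w_def)
  qed (use i range \<open>w \<in> {a..b}\<close> in auto)
  ultimately show ?thesis by blast
qed

theorem lemma5:
  fixes a b :: real and N :: nat
    and g :: "nat \<Rightarrow> real \<Rightarrow> real" and ostar :: "nat \<Rightarrow> real"
  assumes "a \<le> b"
    and cont: "\<And>i. i \<in> {1..N} \<Longrightarrow> continuous_on {a..b} (g i)"
    and argmax: "\<And>i. i \<in> {1..N} \<Longrightarrow> ostar i \<in> {a..b} \<and> (\<forall>w\<in>{a..b}. g i w \<le> g i (ostar i))"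
    and ord: "\<And>i j. i \<in> {1..N} \<Longrightarrow> j \<in> {1..N} \<Longrightarrow> i \<le> j \<Longrightarrow> ostar j \<le> ostar i"
    and incr: "\<And>i. i \<in> {1..N} \<Longrightarrow> mono_on ({a..b} \<inter> {..ostar i}) (g i)"
    and decr: "\<And>i. i \<in> {1..N} \<Longrightarrow> antimono_on ({a..b} \<inter> {ostar i..}) (g i)"
  shows "(SUP v \<in> {v :: nat \<Rightarrow> real. (\<forall>i\<in>{1..N}. v i \<in> {a..b}) \<and>
                                     (\<forall>i j. i \<in> {1..N} \<longrightarrow> j \<in> {1..N} \<longrightarrow> i \<le> j \<longrightarrow> v i \<le> v j)}.
            \<Sum>i=1..N. g i (v i))
       = (SUP v \<in> {a..b}. \<Sum>i=1..N. g i v)"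
  (is "(SUP v \<in> ?V. ?F v) = (SUP x \<in> {a..b}. ?G x)")
proof (rule antisym)
  have const_in_V: "(\<lambda>_. x) \<in> ?V" if "x \<in> {a..b}" for x
    using that by auto
  have bdd_V: "bdd_above (?F ` ?V)"
    using argmax by (intro bdd_aboveI2[of _ _ "\<Sum>i=1..N. g i (ostar i)"] sum_mono) auto
  have bdd_C: "bdd_above (?G ` {a..b})"
    using argmax by (intro bdd_aboveI2[of _ _ "\<Sum>i=1..N. g i (ostar i)"] sum_mono) auto
  show "(SUP v \<in> ?V. ?F v) \<le> (SUP x \<in> {a..b}. ?G x)"
  proof (rule cSUP_mono[OF _ bdd_C])
    show "?V \<noteq> {}"
      using const_in_V[of a] \<open>a \<le> b\<close> by auto
    fix v assume v: "v \<in> ?V"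
    have "mono_on {1..N} v"
      using v by (intro mono_onI) auto
    moreover have "antimono_on {1..N} ostar"
      using ord by (intro monotone_onI) auto
    ultimately have "\<exists>w\<in>{a..b}. \<forall>i\<in>{1..N}. g i (v i) \<le> g i w"
      using v argmax incr decr \<open>a \<le> b\<close> by (intro ex_common_point_dominating) auto
    then obtain w where "w \<in> {a..b}" "\<forall>i\<in>{1..N}. g i (v i) \<le> g i w" ..
    then show "\<exists>w\<in>{a..b}. ?F v \<le> ?G w"
      by (intro bexI[of _ w] sum_mono) auto
  qed
  show "(SUP x \<in> {a..b}. ?G x) \<le> (SUP v \<in> ?V. ?F v)"
  proof (rule cSUP_mono[OF _ bdd_V])
    show "{a..b} \<noteq> {}"
      using \<open>a \<le> b\<close> by simp
    fix x assume "x \<in> {a..b}"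
    then show "\<exists>v\<in>?V. ?G x \<le> ?F v"
      using const_in_V by fastforce
  qed
qed

end
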